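(* Let $m_x,m_v,\ell\ge1$ and $1\le k\le\ell$ be integers, $\mathcal V=\{0,\dots,m_v-1\}$, and assume $\mathcal V^\ell$ is endowed with a multiplication $\odot$ making it a field whose addition is coordinatewise addition modulo $m_v$ (e.g. $m_v$ prime and $\mathcal V^\ell\cong\mathrm{GF}(m_v^\ell)$). For $u\in\mathcal V^\ell\setminus\{0^\ell\}$ let $f_u:\mathcal V^\ell\to\mathcal V^k$ map $v$ to the first $k$ coordinates of $u\odot v$. For $z,z'\in\mathcal V^k$ define $\varphi(v)=((z'-z)\,|\,0^{\ell-k})\odot u^{-1}+v$. Then: (a) $\varphi$ is a bijection of $\mathcal V^\ell$ and $\varphi(f_u^{-1}(z))=f_u^{-1}(z')$. (b) Let $m=m_xm_v$, $n=\ell m$, let $|0\rangle,|\phi\rangle\in\mathcal H_Q$ be unit vectors and $\mathcal E_{Q\to Q}$ a quantum channel. For $1\le j\le m$ let $|\mathrm{PPM},j\rangle=|0\rangle^{\otimes(j-1)}\otimes|\phi\rangle\otimes|0\rangle^{\otimes(m-j)}$; for $x\in\{1,\dots,m_x\}$, $v\in\mathcal V$ let $d(x,v)=(x-1)m_v+v+1$; let $\tilde\rho^v=\frac1{m_x}\sum_{x=1}^{m_x}|\mathrm{PPM},d(x,v)\rangle\langle\mathrm{PPM},d(x,v)|$ and $\rho^{v^\ell}_{Q^n}=\mathcal E^{\otimes n}(\tilde\rho^{v_1}\otimes\cdots\otimes\tilde\rho^{v_\ell})$. Let $U_{\mathrm{CS}}$ be the unitary on $\mathcal H_Q^{\otimes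 m}$ with $U_{\mathrm{CS}}(|\psi_1\rangle\otimes\cdots\otimes|\psi_m\rangle)=|\psi_m\rangle\otimes|\psi_1\rangle\otimes\cdots\otimes|\psi_{m-1}\rangle$. Then for all $v^\ell,v'^\ell\in\mathcal V^\ell$, $$\rho_{Q^n}^{v^\ell+v'^\ell}=\big(U_{\mathrm{CS}}^{v'_1}\otimes\cdots\otimes U_{\mathrm{CS}}^{v'_\ell}\big)\rho_{Q^n}^{v^\ell}\big(U_{\mathrm{CS}}^{v'_1}\otimes\cdots\otimes U_{\mathrm{CS}}^{v'_\ell}\big)^\dagger,$$ with $v^\ell+v'^\ell$ computed coordinatewise modulo $m_v$.
   Context: $a\,|\,b$ denotes concatenation of sequences and $0^j$ the all-zero sequence of length $j$; $z'-z$ is coordinatewise subtraction modulo $m_v$. $f_u^{-1}(z)=\{v\in\mathcal V^\ell: f_u(v)=z\}$. $\mathcal H_Q$ is finite-dimensional. *)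

theory Defs
  imports Complex_Main "HOL-Algebra.Ring"
begin

definition lists_below :: "nat \<Rightarrow> nat \<Rightarrow> nat list set" where
  "lists_below b n = {xs. length xs = n \<and> (\<forall>x\<in>set xs. x < b)}"

definition vadd :: "nat \<Rightarrow> nat list \<Rightarrow> nat list \<Rightarrow> nat list" where
  "vadd mv a b = map2 (\<lambda>x y. (x + y) mod mv) a b"

definition vsub :: "nat \<Rightarrow> nat list \<Rightarrow> nat list \<Rightarrow> nat list" where
  "vsub mv a b = map2 (\<lambda>x y. (x + mv - y) mod mv) a b"

text \<open>Vectors of H_Q: functions nat => complex supported on {..<d}.
  Vectors of H_Q^{\<otimes>n}: functions on index lists of length n with entries < d.
  Operators on H_Q^{\<otimes>n}: kernels nat list => nat list => complex (zero off valid indices).\<close>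

definition unit_vec :: "nat \<Rightarrow> (nat \<Rightarrow> complex) \<Rightarrow> bool" where
  "unit_vec d \<psi> \<longleftrightarrow> (\<forall>i\<ge>d. \<psi> i = 0) \<and> (\<Sum>i<d. (cmod (\<psi> i))\<^sup>2) = 1"

definition tensor_vec :: "nat \<Rightarrow> (nat \<Rightarrow> complex) list \<Rightarrow> nat list \<Rightarrow> complex" where
  "tensor_vec d \<psi>s I =
     (if I \<in> lists_below d (length \<psi>s) then (\<Prod>t<length \<psi>s. (\<psi>s ! t) (I ! t)) else 0)"

definition outer :: "(nat list \<Rightarrow> complex) \<Rightarrow> (nat list \<Rightarrow> complex) \<Rightarrow> nat list \<Rightarrow> nat list \<Rightarrow> complex" where
  "outer a b = (\<lambda>I J. a I * cnj (b J))"

text \<open>tensor product A_1 \<otimes> ... \<otimes> A_r of operators each acting on m copies of H_Q\<close>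
definition op_tensor :: "nat \<Rightarrow> nat \<Rightarrow> (nat list \<Rightarrow> nat list \<Rightarrow> complex) list
                          \<Rightarrow> nat list \<Rightarrow> nat list \<Rightarrow> complex" where
  "op_tensor d m As = (\<lambda>I J.
     if I \<in> lists_below d (length As * m) \<and> J \<in> lists_below d (length As * m)
     then (\<Prod>t<length As. (As ! t) (take m (drop (t * m) I)) (take m (drop (t * m) J)))
     else 0)"

definition op_mult :: "nat \<Rightarrow> nat \<Rightarrow> (nat list \<Rightarrow> nat list \<Rightarrow> complex)
                        \<Rightarrow> (nat list \<Rightarrow> nat list \<Rightarrow> complex) \<Rightarrow> nat list \<Rightarrow> nat list \<Rightarrow> complex" where
  "op_mult d n A B = (\<lambda>I J. \<Sum>K\<in>lists_below d n. A I K * B K J)"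

definition op_id :: "nat \<Rightarrow> nat \<Rightarrow> nat list \<Rightarrow> nat list \<Rightarrow> complex" where
  "op_id d n = (\<lambda>I J. if I \<in> lists_below d n \<and> I = J then 1 else 0)"

primrec op_pow :: "nat \<Rightarrow> nat \<Rightarrow> (nat list \<Rightarrow> nat list \<Rightarrow> complex) \<Rightarrow> nat
                    \<Rightarrow> nat list \<Rightarrow> nat list \<Rightarrow> complex" where
  "op_pow d n A 0 = op_id d n"
| "op_pow d n A (Suc k) = op_mult d n A (op_pow d n A k)"

definition adjoint :: "(nat list \<Rightarrow> nat list \<Rightarrow> complex) \<Rightarrow> nat list \<Rightarrow> nat list \<Rightarrow> complex" where
  "adjoint A = (\<lambda>I J. cnj (A J I))"

text \<open>U_CS on H_Q^{\<otimes>m}: (U \<psi>)(i_1,...,i_m) = \<psi>(i_2,...,i_m,i_1), i.e.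
  U(\<psi>_1 \<otimes> ... \<otimes> \<psi>_m) = \<psi>_m \<otimes> \<psi>_1 \<otimes> ... \<otimes> \<psi>_{m-1}.\<close>
definition cyclic_shift :: "nat \<Rightarrow> nat \<Rightarrow> nat list \<Rightarrow> nat list \<Rightarrow> complex" where
  "cyclic_shift d m = (\<lambda>I J. if I \<in> lists_below d m \<and> J = rotate1 I then 1 else 0)"

definition mat_unit :: "nat \<Rightarrow> nat \<Rightarrow> nat \<Rightarrow> nat \<Rightarrow> complex" where
  "mat_unit a b = (\<lambda>i j. if i = a \<and> j = b then 1 else 0)"

definition supported_op :: "nat \<Rightarrow> (nat \<Rightarrow> nat \<Rightarrow> complex) \<Rightarrow> bool" where
  "supported_op d X \<longleftrightarrow> (\<forall>i j. (d \<le> i \<or> d \<le> j) \<longrightarrow> X i j = 0)"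

definition psd :: "'a set \<Rightarrow> ('a \<Rightarrow> 'a \<Rightarrow> complex) \<Rightarrow> bool" where
  "psd S X \<longleftrightarrow> (\<forall>x. Im (\<Sum>p\<in>S. \<Sum>q\<in>S. cnj (x p) * X p q * x q) = 0
                  \<and> 0 \<le> Re (\<Sum>p\<in>S. \<Sum>q\<in>S. cnj (x p) * X p q * x q))"

text \<open>A quantum channel: linear, trace-preserving, completely positive map on operators of C^d.
  Complete positivity: id_r \<otimes> E is positive for every r.\<close>
definition quantum_channel :: "nat \<Rightarrow> ((nat \<Rightarrow> nat \<Rightarrow> complex) \<Rightarrow> (nat \<Rightarrow> nat \<Rightarrow> complex)) \<Rightarrow> bool" where
  "quantum_channel d E \<longleftrightarrow>
     (\<forall>X. supported_op d X \<longrightarrow> supported_op d (E X)) \<and>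
     (\<forall>a b X Y. supported_op d X \<and> supported_op d Y \<longrightarrow>
         E (\<lambda>i j. a * X i j + b * Y i j) = (\<lambda>i j. a * E X i j + b * E Y i j)) \<and>
     (\<forall>X. supported_op d X \<longrightarrow> (\<Sum>i<d. E X i i) = (\<Sum>i<d. X i i)) \<and>
     (\<forall>(r::nat) (X :: nat \<times> nat \<Rightarrow> nat \<times> nat \<Rightarrow> complex).
         (\<forall>p q. p \<notin> {..<r} \<times> {..<d} \<or> q \<notin> {..<r} \<times> {..<d} \<longrightarrow> X p q = 0) \<and>
         psd ({..<r} \<times> {..<d}) X \<longrightarrow>
         psd ({..<r} \<times> {..<d}) (\<lambda>(a, i) (b, j). E (\<lambda>i' j'. X (a, i') (b, j')) i j))"

text \<open>E^{\<otimes>n}, the linear extension acting on operators on H_Q^{\<otimes>n}\<close>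
definition chan_pow :: "nat \<Rightarrow> nat \<Rightarrow> ((nat \<Rightarrow> nat \<Rightarrow> complex) \<Rightarrow> (nat \<Rightarrow> nat \<Rightarrow> complex))
                        \<Rightarrow> (nat list \<Rightarrow> nat list \<Rightarrow> complex) \<Rightarrow> nat list \<Rightarrow> nat list \<Rightarrow> complex" where
  "chan_pow d n E X = (\<lambda>I J.
     if I \<in> lists_below d n \<and> J \<in> lists_below d n
     then (\<Sum>K\<in>lists_below d n. \<Sum>L\<in>lists_below d n.
             X K L * (\<Prod>t<n. E (mat_unit (K ! t) (L ! t)) (I ! t) (J ! t)))
     else 0)"

definition ppm :: "nat \<Rightarrow> (nat \<Rightarrow> complex) \<Rightarrow> (nat \<Rightarrow> complex) \<Rightarrow> nat \<Rightarrow> nat \<Rightarrow> nat list \<Rightarrow> complex" where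
  "ppm d zero\<^sub>Q \<phi> m j = tensor_vec d (map (\<lambda>t. if t = j - 1 then \<phi> else zero\<^sub>Q) [0..<m])"

definition dpos :: "nat \<Rightarrow> nat \<Rightarrow> nat \<Rightarrow> nat" where
  "dpos mv x v = (x - 1) * mv + v + 1"

definition rho_tilde :: "nat \<Rightarrow> (nat \<Rightarrow> complex) \<Rightarrow> (nat \<Rightarrow> complex) \<Rightarrow> nat \<Rightarrow> nat \<Rightarrow> nat
                          \<Rightarrow> nat list \<Rightarrow> nat list \<Rightarrow> complex" where
  "rho_tilde d zero\<^sub>Q \<phi> mx mv v = (\<lambda>I J. (1 / of_nat mx) *
     (\<Sum>x\<in>{1..mx}. outer (ppm d zero\<^sub>Q \<phi> (mx * mv) (dpos mv x v))
                         (ppm d zero\<^sub>Q \<phi> (mx * mv) (dpos mv x v)) I J))"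

definition rho_out :: "nat \<Rightarrow> ((nat \<Rightarrow> nat \<Rightarrow> complex) \<Rightarrow> (nat \<Rightarrow> nat \<Rightarrow> complex))
      \<Rightarrow> (nat \<Rightarrow> complex) \<Rightarrow> (nat \<Rightarrow> complex) \<Rightarrow> nat \<Rightarrow> nat \<Rightarrow> nat list
      \<Rightarrow> nat list \<Rightarrow> nat list \<Rightarrow> complex" where
  "rho_out d E zero\<^sub>Q \<phi> mx mv vs =
     chan_pow d (length vs * (mx * mv)) E
       (op_tensor d (mx * mv) (map (rho_tilde d zero\<^sub>Q \<phi> mx mv) vs))"

end

theory Submission
  imports Defs "HOL-Number_Theory.Cong"
begin

text \<open>(a) With \<open>c = ((z' - z) | 0^{l-k}) \<odot> u\<^sup>-\<^sup>1\<close>, the map \<open>\<phi>\<close> is translation by \<open>c\<close>,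
  hence a bijection, and \<open>u \<odot> (c + v) = ((z' - z) | 0^{l-k}) + u \<odot> v\<close>; so \<open>f\<^sub>u\<close> is shifted
  by the injective map \<open>+ (z' - z)\<close>, which sends the fibre over \<open>z\<close> to the fibre over \<open>z'\<close>.

  (b) Conjugation by \<open>U\<^sub>C\<^sub>S^{v'\<^sub>1} \<otimes> \<dots> \<otimes> U\<^sub>C\<^sub>S^{v'\<^sub>l}\<close> relabels the \<open>n\<close> tensor positions,
  rotating the \<open>t\<close>-th block of \<open>m\<close> positions by \<open>v'\<^sub>t\<close>. The channel \<open>E^{\<otimes>n}\<close> acts
  position by position and so commutes with this relabelling. Rotating a block by \<open>s\<close> moves the
  pulse of \<open>|PPM, p+1\<rangle>\<close> to position \<open>(p + s) mod m\<close>, and since \<open>m\<^sub>v\<close> divides \<open>m\<close> this maps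
  the pulse positions \<open>p \<equiv> w (mod m\<^sub>v)\<close> of \<open>\<rho>~^w\<close> bijectively onto those of \<open>\<rho>~^{w+s}\<close>.\<close>

lemma mod_add_left_cancel_less:
  fixes a b c m :: nat
  assumes "a < m" "b < m" "(c + a) mod m = (c + b) mod m"
  shows "a = b"
  using assms by (metis cong_def cong_add_lcancel_nat mod_less)

lemma block_end_le: "(t::nat) < l \<Longrightarrow> t * m + m \<le> l * m"
  by (metis Suc_leI add.commute mult_Suc mult_le_mono1)

lemma block_index_less: "(t::nat) < l \<Longrightarrow> i < m \<Longrightarrow> t * m + i < l * m"
  using block_end_le[of t l m] by linarith

lemma bij_betw_add_mod:
  assumes "0 < m"
  shows "bij_betw (\<lambda>t. (s + t) mod m) {..<m::nat} {..<m}"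
proof -
  have into: "(\<lambda>t. (s + t) mod m) ` {..<m} \<subseteq> {..<m}"
    using assms by auto
  have inj: "inj_on (\<lambda>t. (s + t) mod m) {..<m}"
    by (rule inj_onI) (erule mod_add_left_cancel_less[rotated 2]; simp)
  show ?thesis
    using endo_inj_surj[OF _ into inj] inj by (simp add: bij_betw_def)
qed

lemma finite_lists_below: "finite (lists_below d n)"
proof -
  have "lists_below d n = {xs. set xs \<subseteq> {..<d} \<and> length xs = n}"
    by (auto simp: lists_below_def)
  then show ?thesis
    using finite_lists_length_eq[of "{..<d}" n] by simp
qed

lemma prod_indicator:
  "finite A \<Longrightarrow> (\<Prod>t\<in>A. if P t then 1 else 0) = (if \<forall>t\<in>A. P t then 1 else (0::'a::semidom))"
  by (auto simp: prod_zero_iff)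

section \<open>Permuting tensor positions\<close>

definition permute_list :: "(nat \<Rightarrow> nat) \<Rightarrow> nat \<Rightarrow> 'a list \<Rightarrow> 'a list" where
  "permute_list \<pi> n I = map (\<lambda>p. I ! \<pi> p) [0..<n]"

lemma permute_list_nth: "p < n \<Longrightarrow> permute_list \<pi> n I ! p = I ! \<pi> p"
  by (simp add: permute_list_def)

lemma permute_list_in_lists_below:
  assumes "bij_betw \<pi> {..<n} {..<n}" "I \<in> lists_below d n"
  shows "permute_list \<pi> n I \<in> lists_below d n"
proof -
  have "\<pi> p < n" if "p < n" for p
    using assms(1) that by (auto dest: bij_betw_apply)
  then show ?thesis
    using assms(2) by (auto simp: lists_below_def permute_list_def)
qed

lemma bij_betw_permute_list:
  assumes \<pi>: "bij_betw \<pi> {..<n} {..<n}"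
  shows "bij_betw (permute_list \<pi> n) (lists_below d n) (lists_below d n)"
proof -
  have into: "permute_list \<pi> n ` lists_below d n \<subseteq> lists_below d n"
    using permute_list_in_lists_below[OF \<pi>] by auto
  have "inj_on (permute_list \<pi> n) (lists_below d n)"
  proof (rule inj_onI)
    fix I J
    assume I: "I \<in> lists_below d n" and J: "J \<in> lists_below d n"
      and eq: "permute_list \<pi> n I = permute_list \<pi> n J"
    show "I = J"
    proof (rule nth_equalityI)
      show "length I = length J"
        using I J by (simp add: lists_below_def)
      fix q
      assume "q < length I"
      then have "q \<in> \<pi> ` {..<n}"
        using \<pi> I by (simp add: lists_below_def bij_betw_def)
      then obtain p where "p < n" "q = \<pi> p"
        by blast
      then show "I ! q = J ! q"
        using eq by (metis permute_list_nth)
    qed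
  qed
  then show ?thesis
    using endo_inj_surj[OF finite_lists_below into] by (simp add: bij_betw_def)
qed

lemma chan_pow_permute_list:
  assumes \<pi>: "bij_betw \<pi> {..<n} {..<n}"
    and I: "I \<in> lists_below d n" and J: "J \<in> lists_below d n"
  shows "chan_pow d n E X (permute_list \<pi> n I) (permute_list \<pi> n J)
       = chan_pow d n E (\<lambda>K L. X (permute_list \<pi> n K) (permute_list \<pi> n L)) I J"
proof -
  let ?s = "permute_list \<pi> n"
  let ?L = "lists_below d n"
  let ?F = "\<lambda>K L t. E (mat_unit (K ! t) (L ! t)) (I ! t) (J ! t)"
  have s: "bij_betw ?s ?L ?L"
    using \<pi> by (rule bij_betw_permute_list)
  have "chan_pow d n E X (?s I) (?s J)
      = (\<Sum>K\<in>?L. \<Sum>L\<in>?L. X K L * (\<Prod>t<n. E (mat_unit (K ! t) (L ! t)) (?s I ! t) (?s J ! t)))"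
    using permute_list_in_lists_below[OF \<pi>] I J by (simp add: chan_pow_def)
  also have "\<dots> = (\<Sum>K\<in>?L. \<Sum>L\<in>?L.
      X (?s K) (?s L) * (\<Prod>t<n. E (mat_unit (?s K ! t) (?s L ! t)) (?s I ! t) (?s J ! t)))"
    by (rule sum.reindex_bij_betw[OF s, symmetric, THEN trans],
        rule sum.cong[OF refl], rule sum.reindex_bij_betw[OF s, symmetric])
  also have "\<dots> = (\<Sum>K\<in>?L. \<Sum>L\<in>?L. X (?s K) (?s L) * (\<Prod>t<n. ?F K L (\<pi> t)))"
    by (intro sum.cong refl arg_cong2[where f="(*)"] prod.cong) (simp_all add: permute_list_nth)
  also have "\<dots> = (\<Sum>K\<in>?L. \<Sum>L\<in>?L. X (?s K) (?s L) * (\<Prod>t<n. ?F K L t))"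
    by (intro sum.cong refl arg_cong2[where f="(*)"] prod.reindex_bij_betw[OF \<pi>])
  also have "\<dots> = chan_pow d n E (\<lambda>K L. X (?s K) (?s L)) I J"
    using I J by (simp add: chan_pow_def)
  finally show ?thesis .
qed

section \<open>Rotating blocks of positions\<close>

definition block_rotation :: "nat \<Rightarrow> nat list \<Rightarrow> nat \<Rightarrow> nat" where
  "block_rotation m s p = p div m * m + (p mod m + s ! (p div m)) mod m"

lemma block_rotation_div: "0 < m \<Longrightarrow> block_rotation m s p div m = p div m"
  by (simp add: block_rotation_def)

lemma block_rotation_mod:
  "0 < m \<Longrightarrow> block_rotation m s p mod m = (p mod m + s ! (p div m)) mod m"
  by (simp add: block_rotation_def)

lemma bij_betw_block_rotation:
  assumes m: "0 < m"
  shows "bij_betw (block_rotation m s) {..<length s * m} {..<length s * m}"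
proof -
  let ?A = "{..<length s * m}"
  have into: "block_rotation m s ` ?A \<subseteq> ?A"
  proof
    fix y
    assume "y \<in> block_rotation m s ` ?A"
    then obtain p where p: "p < length s * m" "y = block_rotation m s p"
      by auto
    then have "p div m < length s"
      using m by (simp add: div_less_iff_less_mult)
    then show "y \<in> ?A"
      using p m by (simp add: block_rotation_def block_index_less)
  qed
  have inj: "inj_on (block_rotation m s) ?A"
  proof (rule inj_onI)
    fix p q
    assume eq: "block_rotation m s p = block_rotation m s q"
    then have div: "p div m = q div m"
      using block_rotation_div[OF m] by metis
    have "(s ! (p div m) + p mod m) mod m = (s ! (p div m) + q mod m) mod m"
      using block_rotation_mod[OF m, of s] eq div by (metis add.commute)
    then have "p mod m = q mod m"
      by (rule mod_add_left_cancel_less[rotated 2]) (simp_all add: m)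
    with div show "p = q"
      by (metis div_mult_mod_eq)
  qed
  show ?thesis
    using endo_inj_surj[OF _ into inj] inj by (simp add: bij_betw_def)
qed

lemma block_in_lists_below:
  assumes "I \<in> lists_below d (l * m)" "t < l"
  shows "take m (drop (t * m) I) \<in> lists_below d m"
proof -
  have "t * m + m \<le> l * m"
    using assms(2) by (rule block_end_le)
  then show ?thesis
    using assms(1) by (auto simp: lists_below_def dest: in_set_takeD in_set_dropD)
qed

lemma list_eq_by_blocks:
  assumes m: "0 < m" and len: "length A = l * m" "length B = l * m"
    and blocks: "\<And>t. t < l \<Longrightarrow> take m (drop (t * m) A) = take m (drop (t * m) B)"
  shows "A = B"
proof (rule nth_equalityI)
  show "length A = length B"
    using len by simp
  fix p
  assume "p < length A"
  then have t: "p div m < l"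
    using len m by (simp add: div_less_iff_less_mult)
  have block_nth: "take m (drop (p div m * m) X) ! (p mod m) = X ! p" if "length X = l * m"
    for X :: "'a list"
  proof -
    have "p div m * m + m \<le> length X"
      using block_end_le[OF t] that by simp
    then show ?thesis
      using m by (simp add: add.commute)
  qed
  show "A ! p = B ! p"
    using block_nth[OF len(1)] block_nth[OF len(2)] blocks[OF t] by simp
qed

lemma block_permute_list_block_rotation:
  assumes m: "0 < m" and len: "length I = length s * m" and t: "t < length s"
  shows "take m (drop (t * m) (permute_list (block_rotation m s) (length s * m) I))
       = rotate (s ! t) (take m (drop (t * m) I))"
proof (rule nth_equalityI)
  have tm: "t * m + m \<le> length s * m"
    using t by (rule block_end_le)
  then show "length (take m (drop (t * m) (permute_list (block_rotation m s) (length s * m) I)))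
      = length (rotate (s ! t) (take m (drop (t * m) I)))"
    using len by (simp add: permute_list_def)
  fix i
  assume "i < length (take m (drop (t * m) (permute_list (block_rotation m s) (length s * m) I)))"
  then have i: "i < m"
    using tm by (simp add: permute_list_def)
  have "t * m \<le> length s * m"
    using tm by linarith
  have "take m (drop (t * m) (permute_list (block_rotation m s) (length s * m) I)) ! i
      = I ! block_rotation m s (t * m + i)"
    using i block_index_less[OF t i] \<open>t * m \<le> length s * m\<close>
    by (simp add: permute_list_def add.commute)
  also have "\<dots> = I ! (t * m + (s ! t + i) mod m)"
    using i m by (simp add: block_rotation_def add.commute)
  also have "\<dots> = rotate (s ! t) (take m (drop (t * m) I)) ! i"
    using i tm len m \<open>t * m \<le> length s * m\<close> by (simp add: nth_rotate add.commute)
  finally show "take m (drop (t * m) (permute_list (block_rotation m s) (length s * m) I)) ! i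
      = rotate (s ! t) (take m (drop (t * m) I)) ! i" .
qed

lemma blocks_eq_rotate_iff_permute_list_block_rotation:
  assumes m: "0 < m" and I: "I \<in> lists_below d (length s * m)" and J: "J \<in> lists_below d (length s * m)"
  shows "(\<forall>t<length s. take m (drop (t * m) J) = rotate (s ! t) (take m (drop (t * m) I)))
     \<longleftrightarrow> J = permute_list (block_rotation m s) (length s * m) I"
    (is "(\<forall>t<length s. ?block t J = _) \<longleftrightarrow> J = ?\<sigma> I")
proof
  assume blocks: "\<forall>t<length s. ?block t J = rotate (s ! t) (?block t I)"
  show "J = ?\<sigma> I"
  proof (rule list_eq_by_blocks[OF m])
    show "length J = length s * m" "length (?\<sigma> I) = length s * m"
      using J by (simp_all add: lists_below_def permute_list_def)
    show "?block t J = ?block t (?\<sigma> I)" if "t < length s" for t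
      using that blocks I block_permute_list_block_rotation[OF m, of I s]
      by (simp add: lists_below_def)
  qed
next
  assume "J = ?\<sigma> I"
  then show "\<forall>t<length s. ?block t J = rotate (s ! t) (?block t I)"
    using I block_permute_list_block_rotation[OF m, of I s] by (simp add: lists_below_def)
qed

section \<open>Permutation operators\<close>

definition permutation_op :: "nat \<Rightarrow> nat \<Rightarrow> (nat list \<Rightarrow> nat list) \<Rightarrow> nat list \<Rightarrow> nat list \<Rightarrow> complex"
  where "permutation_op d n \<sigma> = (\<lambda>I J. if I \<in> lists_below d n \<and> J = \<sigma> I then 1 else 0)"

lemma op_pow_cyclic_shift:
  "op_pow d m (cyclic_shift d m) s = permutation_op d m (rotate s)"
proof (induction s)
  case 0
  show ?case
    by (auto simp: op_id_def permutation_op_def fun_eq_iff)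
next
  case (Suc s)
  have rotate1_in: "I \<in> lists_below d m \<Longrightarrow> rotate1 I \<in> lists_below d m" for I
    by (simp add: lists_below_def)
  show ?case
  proof (intro ext)
    fix I J
    have "op_pow d m (cyclic_shift d m) (Suc s) I J
        = (\<Sum>K\<in>lists_below d m. if K = rotate1 I then
             (if I \<in> lists_below d m \<and> J = rotate s K then 1 else 0) else 0)"
      unfolding op_pow.simps op_mult_def Suc.IH
      by (intro sum.cong refl) (auto simp: rotate1_in cyclic_shift_def permutation_op_def)
    also have "\<dots> = permutation_op d m (rotate (Suc s)) I J"
      by (auto simp: finite_lists_below rotate1_in rotate1_rotate_swap permutation_op_def)
    finally show "op_pow d m (cyclic_shift d m) (Suc s) I J = permutation_op d m (rotate (Suc s)) I J" .
  qed
qed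

lemma op_tensor_cyclic_shift_powers:
  assumes m: "0 < m"
  shows "op_tensor d m (map (op_pow d m (cyclic_shift d m)) s)
       = permutation_op d (length s * m) (permute_list (block_rotation m s) (length s * m))"
proof (intro ext)
  fix I J
  let ?n = "length s * m"
  let ?L = "lists_below d ?n"
  let ?\<sigma> = "permute_list (block_rotation m s) ?n"
  let ?block = "\<lambda>t X. take m (drop (t * m) X)"
  have \<sigma>_in: "I \<in> ?L \<Longrightarrow> ?\<sigma> I \<in> ?L"
    using permute_list_in_lists_below[OF bij_betw_block_rotation[OF m]] by blast
  show "op_tensor d m (map (op_pow d m (cyclic_shift d m)) s) I J = permutation_op d ?n ?\<sigma> I J"
  proof (cases "I \<in> ?L \<and> J \<in> ?L")
    case True
    then have I: "I \<in> ?L" and J: "J \<in> ?L"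
      by auto
    have blocks_iff: "(\<forall>t\<in>{..<length s}. ?block t J = rotate (s ! t) (?block t I)) \<longleftrightarrow> J = ?\<sigma> I"
      unfolding Ball_def lessThan_iff by (rule blocks_eq_rotate_iff_permute_list_block_rotation[OF m I J])
    have "op_tensor d m (map (op_pow d m (cyclic_shift d m)) s) I J
        = (\<Prod>t<length s. if ?block t J = rotate (s ! t) (?block t I) then 1 else 0)"
      unfolding op_tensor_def using True
      by (auto intro!: prod.cong simp: op_pow_cyclic_shift permutation_op_def block_in_lists_below)
    also have "\<dots> = (if J = ?\<sigma> I then 1 else 0)"
      unfolding prod_indicator[OF finite_lessThan] blocks_iff ..
    finally show ?thesis
      using I by (simp add: permutation_op_def)
  next
    case False
    then show ?thesis
      using \<sigma>_in by (auto simp: op_tensor_def permutation_op_def)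
  qed
qed

lemma permutation_op_conjugate:
  assumes \<sigma>_in: "\<And>I. I \<in> lists_below d n \<Longrightarrow> \<sigma> I \<in> lists_below d n"
  shows "op_mult d n (op_mult d n (permutation_op d n \<sigma>) X) (adjoint (permutation_op d n \<sigma>))
       = (\<lambda>I J. if I \<in> lists_below d n \<and> J \<in> lists_below d n then X (\<sigma> I) (\<sigma> J) else 0)"
proof (intro ext)
  fix I J
  let ?L = "lists_below d n"
  have left: "op_mult d n (permutation_op d n \<sigma>) X I K = (if I \<in> ?L then X (\<sigma> I) K else 0)" for K
  proof -
    have "op_mult d n (permutation_op d n \<sigma>) X I K
        = (\<Sum>K'\<in>?L. if K' = \<sigma> I then (if I \<in> ?L then X K' K else 0) else 0)"
      unfolding op_mult_def permutation_op_def by (intro sum.cong) auto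
    then show ?thesis
      using \<sigma>_in by (simp add: finite_lists_below)
  qed
  have "op_mult d n (op_mult d n (permutation_op d n \<sigma>) X) (adjoint (permutation_op d n \<sigma>)) I J
      = (\<Sum>K\<in>?L. if K = \<sigma> J then (if I \<in> ?L \<and> J \<in> ?L then X (\<sigma> I) K else 0) else 0)"
    unfolding op_mult_def[of d n "op_mult d n _ X"] left adjoint_def
    by (intro sum.cong) (auto simp: permutation_op_def)
  then show "op_mult d n (op_mult d n (permutation_op d n \<sigma>) X) (adjoint (permutation_op d n \<sigma>)) I J
      = (if I \<in> ?L \<and> J \<in> ?L then X (\<sigma> I) (\<sigma> J) else 0)"
    using \<sigma>_in by (simp add: finite_lists_below)
qed

section \<open>Shifting the pulse positions\<close>

lemma ppm_rotate:
  assumes m: "0 < m" and p: "p < m" and K: "K \<in> lists_below d m"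
  shows "ppm d z \<phi> m (Suc p) (rotate s K) = ppm d z \<phi> m (Suc ((p + s) mod m)) K"
proof -
  have len: "length K = m"
    using K by (simp add: lists_below_def)
  let ?G = "\<lambda>t. (if t = (p + s) mod m then \<phi> else z) (K ! t)"
  have "ppm d z \<phi> m (Suc p) (rotate s K) = (\<Prod>t<m. (if t = p then \<phi> else z) (rotate s K ! t))"
    using K by (simp add: ppm_def tensor_vec_def lists_below_def)
  also have "\<dots> = (\<Prod>t<m. ?G ((s + t) mod m))"
  proof (rule prod.cong[OF refl])
    fix t
    assume t: "t \<in> {..<m}"
    have "(s + t) mod m = (p + s) mod m \<longleftrightarrow> t = p"
    proof
      assume "(s + t) mod m = (p + s) mod m"
      then have "(s + t) mod m = (s + p) mod m"
        by (simp add: add.commute)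
      then show "t = p"
        by (rule mod_add_left_cancel_less[rotated 2]) (use t p in simp_all)
    qed (simp add: add.commute)
    then show "(if t = p then \<phi> else z) (rotate s K ! t) = ?G ((s + t) mod m)"
      using t len by (simp add: nth_rotate)
  qed
  also have "\<dots> = (\<Prod>t<m. ?G t)"
    by (rule prod.reindex_bij_betw[OF bij_betw_add_mod[OF m]])
  also have "\<dots> = ppm d z \<phi> m (Suc ((p + s) mod m)) K"
    using K by (simp add: ppm_def tensor_vec_def)
  finally show ?thesis .
qed

text \<open>The zero-based positions \<open>d(x, w) - 1\<close>, \<open>x = 1..mx\<close>, at which \<open>\<rho>~^w\<close> has its pulse.\<close>
definition residue_positions :: "nat \<Rightarrow> nat \<Rightarrow> nat \<Rightarrow> nat set" where
  "residue_positions mx mv w = {p. p < mx * mv \<and> p mod mv = w}"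

lemma bij_betw_dpos_residue_positions:
  assumes mv: "0 < mv" and w: "w < mv"
  shows "bij_betw (\<lambda>x. dpos mv x w - 1) {1..mx} (residue_positions mx mv w)"
proof (rule bij_betw_byWitness[where f'="\<lambda>p. p div mv + 1"])
  show "\<forall>x\<in>{1..mx}. (dpos mv x w - 1) div mv + 1 = x"
    using mv w by (auto simp: dpos_def)
  show "\<forall>p\<in>residue_positions mx mv w. dpos mv (p div mv + 1) w - 1 = p"
    by (auto simp: dpos_def residue_positions_def)
  show "(\<lambda>x. dpos mv x w - 1) ` {1..mx} \<subseteq> residue_positions mx mv w"
  proof
    fix p
    assume "p \<in> (\<lambda>x. dpos mv x w - 1) ` {1..mx}"
    then obtain x where x: "x \<in> {1..mx}" "p = (x - 1) * mv + w"
      by (auto simp: dpos_def)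
    have "x - 1 < mx"
      using x by auto
    then have "p < mx * mv"
      using x(2) block_index_less[OF _ w] by simp
    then show "p \<in> residue_positions mx mv w"
      using x w by (simp add: residue_positions_def)
  qed
  show "(\<lambda>p. p div mv + 1) ` residue_positions mx mv w \<subseteq> {1..mx}"
    using mv by (auto simp: residue_positions_def div_less_iff_less_mult Suc_le_eq)
qed

lemma bij_betw_shift_residue_positions:
  assumes mv: "0 < mv" and mx: "0 < mx" and w: "w < mv"
  shows "bij_betw (\<lambda>p. (p + s) mod (mx * mv))
           (residue_positions mx mv w) (residue_positions mx mv ((w + s) mod mv))"
proof -
  let ?m = "mx * mv"
  let ?f = "\<lambda>p. (p + s) mod ?m"
  let ?A = "residue_positions mx mv w" and ?B = "residue_positions mx mv ((w + s) mod mv)"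
  have into: "?f ` ?A \<subseteq> ?B"
  proof
    fix y
    assume "y \<in> ?f ` ?A"
    then obtain p where p: "p mod mv = w" "y = (p + s) mod ?m"
      by (auto simp: residue_positions_def)
    then have "y mod mv = (p + s) mod mv"
      by (simp add: mod_mod_cancel)
    also have "\<dots> = (w + s) mod mv"
      using p by (metis mod_add_left_eq)
    finally have "y mod mv = (w + s) mod mv" .
    then show "y \<in> ?B"
      using p mv mx by (simp add: residue_positions_def)
  qed
  have "inj_on ?f {..<?m}"
    using bij_betw_add_mod[of ?m s] mv mx by (simp add: bij_betw_def add.commute)
  then have inj: "inj_on ?f ?A"
    by (rule inj_on_subset) (auto simp: residue_positions_def)
  have "card ?A = card ?B"
    using bij_betw_same_card[OF bij_betw_dpos_residue_positions[OF mv w]]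
      bij_betw_same_card[OF bij_betw_dpos_residue_positions[OF mv, of "(w + s) mod mv"]] mv
    by simp
  then have "?f ` ?A = ?B"
    using card_subset_eq[OF _ into] card_image[OF inj] by (simp add: residue_positions_def)
  with inj show ?thesis
    by (simp add: bij_betw_def)
qed

lemma rho_tilde_eq_sum_residue_positions:
  assumes mv: "0 < mv" and w: "w < mv"
  shows "rho_tilde d z \<phi> mx mv w K L = 1 / of_nat mx *
    (\<Sum>p\<in>residue_positions mx mv w.
       ppm d z \<phi> (mx * mv) (Suc p) K * cnj (ppm d z \<phi> (mx * mv) (Suc p) L))"
  unfolding rho_tilde_def outer_def
    sum.reindex_bij_betw[OF bij_betw_dpos_residue_positions[OF mv w], symmetric]
  by (simp add: dpos_def)

lemma rho_tilde_rotate: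
  assumes mv: "0 < mv" and mx: "0 < mx" and w: "w < mv"
    and K: "K \<in> lists_below d (mx * mv)" and L: "L \<in> lists_below d (mx * mv)"
  shows "rho_tilde d z \<phi> mx mv w (rotate s K) (rotate s L)
       = rho_tilde d z \<phi> mx mv ((w + s) mod mv) K L"
proof -
  let ?m = "mx * mv"
  let ?pulse = "\<lambda>p. ppm d z \<phi> ?m (Suc p) K * cnj (ppm d z \<phi> ?m (Suc p) L)"
  have m: "0 < ?m"
    using mv mx by simp
  have "rho_tilde d z \<phi> mx mv w (rotate s K) (rotate s L)
      = 1 / of_nat mx * (\<Sum>p\<in>residue_positions mx mv w. ?pulse ((p + s) mod ?m))"
    unfolding rho_tilde_eq_sum_residue_positions[OF mv w]
  proof (rule arg_cong[where f="\<lambda>S. 1 / of_nat mx * S"], rule sum.cong[OF refl])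
    fix p
    assume "p \<in> residue_positions mx mv w"
    then have p: "p < ?m"
      by (simp add: residue_positions_def)
    show "ppm d z \<phi> ?m (Suc p) (rotate s K) * cnj (ppm d z \<phi> ?m (Suc p) (rotate s L))
        = ?pulse ((p + s) mod ?m)"
      by (simp only: ppm_rotate[OF m p K] ppm_rotate[OF m p L])
  qed
  also have "\<dots> = 1 / of_nat mx * (\<Sum>p\<in>residue_positions mx mv ((w + s) mod mv). ?pulse p)"
    by (subst sum.reindex_bij_betw[OF bij_betw_shift_residue_positions[OF mv mx w]]) (rule refl)
  also have "\<dots> = rho_tilde d z \<phi> mx mv ((w + s) mod mv) K L"
    using mv by (simp add: rho_tilde_eq_sum_residue_positions)
  finally show ?thesis .
qed

lemma vadd_nth: "t < length a \<Longrightarrow> t < length b \<Longrightarrow> vadd mv a b ! t = (a ! t + b ! t) mod mv"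
  by (simp add: vadd_def)

lemma length_vadd: "length (vadd mv a b) = min (length a) (length b)"
  by (simp add: vadd_def)

lemma op_tensor_rho_tilde_vadd:
  assumes mv: "0 < mv" and mx: "0 < mx"
    and v: "v \<in> lists_below mv l" and v': "v' \<in> lists_below mv l"
    and K: "K \<in> lists_below d (l * (mx * mv))" and L: "L \<in> lists_below d (l * (mx * mv))"
  defines "\<sigma> \<equiv> permute_list (block_rotation (mx * mv) v') (l * (mx * mv))"
  shows "op_tensor d (mx * mv) (map (rho_tilde d z \<phi> mx mv) (vadd mv v v')) K L
       = op_tensor d (mx * mv) (map (rho_tilde d z \<phi> mx mv) v) (\<sigma> K) (\<sigma> L)"
proof -
  let ?m = "mx * mv"
  let ?block = "\<lambda>t X. take ?m (drop (t * ?m) X)"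
  have m: "0 < ?m"
    using mv mx by simp
  have len: "length v = l" "length v' = l"
    using v v' by (auto simp: lists_below_def)
  have \<sigma>_in: "\<sigma> K \<in> lists_below d (l * ?m)" "\<sigma> L \<in> lists_below d (l * ?m)"
    using permute_list_in_lists_below[OF bij_betw_block_rotation[OF m, of v']] K L len
    by (simp_all add: \<sigma>_def)
  have block_\<sigma>: "?block t (\<sigma> X) = rotate (v' ! t) (?block t X)"
    if "X \<in> lists_below d (l * ?m)" "t < l" for X t
    using block_permute_list_block_rotation[OF m, of X v' t] that len
    by (simp add: \<sigma>_def lists_below_def)
  have "op_tensor d ?m (map (rho_tilde d z \<phi> mx mv) (vadd mv v v')) K L
      = (\<Prod>t<l. rho_tilde d z \<phi> mx mv ((v ! t + v' ! t) mod mv) (?block t K) (?block t L))"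
    using K L len by (simp add: op_tensor_def length_vadd vadd_nth)
  also have "\<dots> = (\<Prod>t<l. rho_tilde d z \<phi> mx mv (v ! t) (?block t (\<sigma> K)) (?block t (\<sigma> L)))"
  proof (rule prod.cong[OF refl])
    fix t
    assume "t \<in> {..<l}"
    then have t: "t < l" and "v ! t < mv"
      using v by (auto simp: lists_below_def)
    then show "rho_tilde d z \<phi> mx mv ((v ! t + v' ! t) mod mv) (?block t K) (?block t L)
        = rho_tilde d z \<phi> mx mv (v ! t) (?block t (\<sigma> K)) (?block t (\<sigma> L))"
      using rho_tilde_rotate[OF mv mx _ block_in_lists_below[OF K t] block_in_lists_below[OF L t]]
      by (simp add: block_\<sigma>[OF K t] block_\<sigma>[OF L t])
  qed
  also have "\<dots> = op_tensor d ?m (map (rho_tilde d z \<phi> mx mv) v) (\<sigma> K) (\<sigma> L)"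
    using \<sigma>_in len by (simp add: op_tensor_def)
  finally show ?thesis .
qed

lemma rho_out_vadd:
  fixes d :: nat
  assumes mv: "0 < mv" and mx: "0 < mx"
    and v: "v \<in> lists_below mv l" and v': "v' \<in> lists_below mv l"
  defines "W \<equiv> op_tensor d (mx * mv) (map (op_pow d (mx * mv) (cyclic_shift d (mx * mv))) v')"
  shows "rho_out d E z \<phi> mx mv (vadd mv v v')
       = op_mult d (l * (mx * mv)) (op_mult d (l * (mx * mv)) W (rho_out d E z \<phi> mx mv v)) (adjoint W)"
proof -
  let ?m = "mx * mv"
  let ?n = "l * ?m"
  let ?L = "lists_below d ?n"
  let ?\<sigma> = "permute_list (block_rotation ?m v') ?n"
  have m: "0 < ?m"
    using mv mx by simp
  have len: "length v = l" "length v' = l"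
    using v v' by (auto simp: lists_below_def)
  have \<pi>: "bij_betw (block_rotation ?m v') {..<?n} {..<?n}"
    using bij_betw_block_rotation[OF m, of v'] len by simp
  have W_eq: "W = permutation_op d ?n ?\<sigma>"
    using op_tensor_cyclic_shift_powers[OF m, of d v'] len by (simp add: W_def)
  have \<sigma>_in: "\<And>I. I \<in> ?L \<Longrightarrow> ?\<sigma> I \<in> ?L"
    using permute_list_in_lists_below[OF \<pi>] by blast
  have "rho_out d E z \<phi> mx mv (vadd mv v v') I J
      = (if I \<in> ?L \<and> J \<in> ?L then rho_out d E z \<phi> mx mv v (?\<sigma> I) (?\<sigma> J) else 0)" for I J
  proof (cases "I \<in> ?L \<and> J \<in> ?L")
    case True
    then have I: "I \<in> ?L" and J: "J \<in> ?L"
      by auto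
    have "rho_out d E z \<phi> mx mv v (?\<sigma> I) (?\<sigma> J)
        = chan_pow d ?n E (\<lambda>K L. op_tensor d ?m (map (rho_tilde d z \<phi> mx mv) v) (?\<sigma> K) (?\<sigma> L)) I J"
      using chan_pow_permute_list[OF \<pi> I J] len by (simp add: rho_out_def)
    also have "\<dots> = rho_out d E z \<phi> mx mv (vadd mv v v') I J"
      unfolding rho_out_def chan_pow_def using len
      by (intro if_cong refl sum.cong arg_cong2[where f="(*)"]
          op_tensor_rho_tilde_vadd[OF mv mx v v', symmetric]) (auto simp: length_vadd)
    finally show ?thesis
      using True by simp
  next
    case False
    then show ?thesis
      using len by (auto simp: rho_out_def chan_pow_def length_vadd)
  qed
  then show ?thesis
    by (simp add: W_eq permutation_op_conjugate[OF \<sigma>_in] fun_eq_iff)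
qed

section \<open>Translations and the fibres of \<open>f\<^sub>u\<close>\<close>

lemma vadd_replicate_zero: "x \<in> lists_below mv l \<Longrightarrow> vadd mv (replicate l 0) x = x"
  by (intro nth_equalityI) (auto simp: vadd_def lists_below_def)

lemma vsub_in_lists_below:
  "0 < mv \<Longrightarrow> a \<in> lists_below mv k \<Longrightarrow> b \<in> lists_below mv k \<Longrightarrow> vsub mv a b \<in> lists_below mv k"
  by (auto simp: vsub_def lists_below_def set_zip)

lemma take_vadd: "take k (vadd mv a b) = vadd mv (take k a) (take k b)"
  by (simp add: vadd_def take_map take_zip)

lemma vadd_vsub:
  assumes a: "a \<in> lists_below mv k" and b: "b \<in> lists_below mv k"
  shows "vadd mv (vsub mv a b) b = a"
proof (rule nth_equalityI)
  show "length (vadd mv (vsub mv a b) b) = length a"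
    using a b by (simp add: vadd_def vsub_def lists_below_def)
  fix i
  assume "i < length (vadd mv (vsub mv a b) b)"
  then have i: "i < length a" "i < length b"
    by (simp_all add: vadd_def vsub_def)
  then have lt: "a ! i < mv" "b ! i < mv"
    using a b by (auto simp: lists_below_def)
  have "vadd mv (vsub mv a b) b ! i = ((a ! i + mv - b ! i) mod mv + b ! i) mod mv"
    using i by (simp add: vadd_def vsub_def)
  also have "\<dots> = (a ! i + mv - b ! i + b ! i) mod mv"
    by (simp add: mod_add_left_eq)
  also have "\<dots> = a ! i"
    using lt by simp
  finally show "vadd mv (vsub mv a b) b ! i = a ! i" .
qed

lemma inj_on_vadd:
  assumes c: "c \<in> lists_below mv k"
  shows "inj_on (vadd mv c) (lists_below mv k)"
proof (rule inj_onI)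
  fix a b
  assume a: "a \<in> lists_below mv k" and b: "b \<in> lists_below mv k" and eq: "vadd mv c a = vadd mv c b"
  show "a = b"
  proof (rule nth_equalityI)
    show "length a = length b"
      using a b by (simp add: lists_below_def)
    fix i
    assume "i < length a"
    then have i: "i < length a" "i < length b" "i < length c"
      using a b c by (auto simp: lists_below_def)
    then have "(c ! i + a ! i) mod mv = (c ! i + b ! i) mod mv"
      using arg_cong[OF eq, of "\<lambda>x. x ! i"] by (simp add: vadd_def)
    moreover have "a ! i < mv" "b ! i < mv"
      using a b i by (auto simp: lists_below_def)
    ultimately show "a ! i = b ! i"
      using mod_add_left_cancel_less by blast
  qed
qed

lemma bij_betw_image_fibre:
  assumes \<phi>: "bij_betw \<phi> A A" and shift: "\<And>v. v \<in> A \<Longrightarrow> f (\<phi> v) = h (f v)"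
    and h: "inj_on h B" "f ` A \<subseteq> B" "z \<in> B" "h z = z'"
  shows "\<phi> ` {v \<in> A. f v = z} = {v \<in> A. f v = z'}"
proof -
  have "f (\<phi> v) = z' \<longleftrightarrow> f v = z" if "v \<in> A" for v
    using that shift h by (auto dest: inj_onD)
  then have "{v \<in> A. f (\<phi> v) = z'} = {v \<in> A. f v = z}"
    by blast
  moreover have "{v \<in> A. f v = z'} = \<phi> ` {v \<in> A. f (\<phi> v) = z'}"
    using \<phi> by (auto simp: bij_betw_def)
  ultimately show ?thesis
    by simp
qed

lemma (in abelian_group) bij_betw_add_left:
  "c \<in> carrier G \<Longrightarrow> bij_betw (\<lambda>v. c \<oplus> v) (carrier G) (carrier G)"
  by (rule bij_betw_byWitness[where f'="\<lambda>v. \<ominus> c \<oplus> v"]) (auto simp: a_assoc[symmetric] l_neg r_neg)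

lemma zero_eq_replicate:
  fixes G :: "nat list ring"
  assumes "abelian_group G" and carrier: "carrier G = lists_below mv l"
    and add: "\<forall>a\<in>carrier G. \<forall>b\<in>carrier G. a \<oplus>\<^bsub>G\<^esub> b = vadd mv a b" and mv: "0 < mv"
  shows "\<zero>\<^bsub>G\<^esub> = replicate l 0"
proof -
  interpret abelian_group G
    by fact
  have r: "replicate l 0 \<in> carrier G"
    using carrier mv by (simp add: lists_below_def)
  have "replicate l 0 = replicate l 0 \<oplus>\<^bsub>G\<^esub> \<zero>\<^bsub>G\<^esub>"
    using r by simp
  also have "\<dots> = vadd mv (replicate l 0) \<zero>\<^bsub>G\<^esub>"
    using add r by simp
  also have "\<dots> = \<zero>\<^bsub>G\<^esub>"
    using carrier zero_closed by (intro vadd_replicate_zero) simp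
  finally show ?thesis ..
qed

lemma translation_maps_fibres:
  fixes R :: "nat list ring"
  assumes "field R" and carrier: "carrier R = lists_below mv l"
    and add: "\<forall>a\<in>carrier R. \<forall>b\<in>carrier R. a \<oplus>\<^bsub>R\<^esub> b = vadd mv a b"
    and mv: "0 < mv" and kl: "k \<le> l"
    and u: "u \<in> carrier R" "u \<noteq> replicate l 0"
    and z: "z \<in> lists_below mv k" and z': "z' \<in> lists_below mv k"
  defines "c \<equiv> (vsub mv z' z @ replicate (l - k) 0) \<otimes>\<^bsub>R\<^esub> inv\<^bsub>R\<^esub> u"
  shows "bij_betw (\<lambda>v. c \<oplus>\<^bsub>R\<^esub> v) (carrier R) (carrier R)"
    and "(\<lambda>v. c \<oplus>\<^bsub>R\<^esub> v) ` {v \<in> carrier R. take k (u \<otimes>\<^bsub>R\<^esub> v) = z}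
       = {v \<in> carrier R. take k (u \<otimes>\<^bsub>R\<^esub> v) = z'}"
proof -
  interpret field R
    by fact
  let ?\<delta> = "vsub mv z' z"
  let ?w = "?\<delta> @ replicate (l - k) 0"
  have \<delta>: "?\<delta> \<in> lists_below mv k"
    using vsub_in_lists_below[OF mv z' z] .
  have unit: "u \<in> Units R"
    using u zero_eq_replicate[OF abelian_group_axioms carrier add mv] by (simp add: field_Units)
  have w: "?w \<in> carrier R"
    using \<delta> kl mv carrier by (auto simp: lists_below_def)
  then have c: "c \<in> carrier R"
    using unit by (simp add: c_def)
  show bij: "bij_betw (\<lambda>v. c \<oplus>\<^bsub>R\<^esub> v) (carrier R) (carrier R)"
    using c by (rule bij_betw_add_left)
  have "u \<otimes>\<^bsub>R\<^esub> c = ?w \<otimes>\<^bsub>R\<^esub> (u \<otimes>\<^bsub>R\<^esub> inv\<^bsub>R\<^esub> u)"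
    unfolding c_def by (rule m_lcomm[OF u(1) w Units_inv_closed[OF unit]])
  also have "\<dots> = ?w"
    using unit w by simp
  finally have uc: "u \<otimes>\<^bsub>R\<^esub> c = ?w" .
  have shift: "take k (u \<otimes>\<^bsub>R\<^esub> (c \<oplus>\<^bsub>R\<^esub> v)) = vadd mv ?\<delta> (take k (u \<otimes>\<^bsub>R\<^esub> v))"
    if v: "v \<in> carrier R" for v
  proof -
    have "u \<otimes>\<^bsub>R\<^esub> (c \<oplus>\<^bsub>R\<^esub> v) = ?w \<oplus>\<^bsub>R\<^esub> u \<otimes>\<^bsub>R\<^esub> v"
      using u(1) c v by (simp add: r_distr uc)
    also have "\<dots> = vadd mv ?w (u \<otimes>\<^bsub>R\<^esub> v)"
      using add w u(1) v by simp
    finally show ?thesis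
      using \<delta> by (simp add: take_vadd lists_below_def)
  qed
  have "take k (u \<otimes>\<^bsub>R\<^esub> v) \<in> lists_below mv k" if "v \<in> carrier R" for v
    using m_closed[OF u(1) that] carrier kl by (auto simp: lists_below_def dest: in_set_takeD)
  then show "(\<lambda>v. c \<oplus>\<^bsub>R\<^esub> v) ` {v \<in> carrier R. take k (u \<otimes>\<^bsub>R\<^esub> v) = z}
       = {v \<in> carrier R. take k (u \<otimes>\<^bsub>R\<^esub> v) = z'}"
    by (intro bij_betw_image_fibre[where f="\<lambda>v. take k (u \<otimes>\<^bsub>R\<^esub> v)", OF bij shift
          inj_on_vadd[OF \<delta>] _ z vadd_vsub[OF z' z]]) auto
qed

theorem mainTheorem8:
  fixes mx mv l k :: nat
    and R :: "nat list ring"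
  assumes "1 \<le> mx" and "1 \<le> mv" and "1 \<le> l" and "1 \<le> k" and "k \<le> l"
    and "field R"
    and "carrier R = lists_below mv l"
    and "\<forall>a\<in>carrier R. \<forall>b\<in>carrier R. a \<oplus>\<^bsub>R\<^esub> b = vadd mv a b"
  shows
    "(\<forall>u z z'. u \<in> lists_below mv l \<and> u \<noteq> replicate l 0 \<and>
         z \<in> lists_below mv k \<and> z' \<in> lists_below mv k \<longrightarrow>
       (let f = (\<lambda>v. take k (u \<otimes>\<^bsub>R\<^esub> v));
            \<phi> = (\<lambda>v. ((vsub mv z' z @ replicate (l - k) 0) \<otimes>\<^bsub>R\<^esub> inv\<^bsub>R\<^esub> u) \<oplus>\<^bsub>R\<^esub> v)
        in bij_betw \<phi> (lists_below mv l) (lists_below mv l) \<and>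
           \<phi> ` {v \<in> lists_below mv l. f v = z} = {v \<in> lists_below mv l. f v = z'}))
   \<and>
    (\<forall>(d::nat) zero\<^sub>Q \<psi> E. 1 \<le> d \<and> unit_vec d zero\<^sub>Q \<and> unit_vec d \<psi> \<and> quantum_channel d E \<longrightarrow>
       (\<forall>v\<in>lists_below mv l. \<forall>v'\<in>lists_below mv l.
          (let m = mx * mv; n = l * m;
               W = op_tensor d m (map (op_pow d m (cyclic_shift d m)) v')
           in rho_out d E zero\<^sub>Q \<psi> mx mv (vadd mv v v')
              = op_mult d n (op_mult d n W (rho_out d E zero\<^sub>Q \<psi> mx mv v)) (adjoint W))))"
proof -
  have pos: "0 < mx" "0 < mv"
    using assms(1,2) by simp_all
  show ?thesis
    unfolding Let_def
    apply (intro conjI allI impI ballI)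
    subgoal for u z z'
      using translation_maps_fibres(1)[OF assms(6-8) pos(2) assms(5), of u z z'] assms(7) by simp
    subgoal for u z z'
      using translation_maps_fibres(2)[OF assms(6-8) pos(2) assms(5), of u z z'] assms(7) by simp
    subgoal for d zero\<^sub>Q \<psi> E v v'
      using rho_out_vadd[OF pos(2,1), of v l v' d E zero\<^sub>Q \<psi>] by simp
    done
qed

end
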